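(* Let $N\ge 3$ and integers $0\le j\le i<N-1$. Let $c$ be a class, and let $A\subseteq B$ be sets of classes with $c\in A$, $|A|=N-i$, $|B|=N-j$. Let sample $s_1$ have class uniformly distributed on $A$ and sample $s_2$ have class uniformly distributed on $B$, independently. In a $3$IC query of $s_1,s_2$ with the representative of class $c$, define the number of settled samples to be $2$ if both $s_1$ and $s_2$ have class $c$; $1$ if exactly one of them has class $c$, or if neither has class $c$ but $s_1$ and $s_2$ have the same class; and $0$ otherwise. Then the expected number of settled samples is $$SL=\frac{2(N-i)+(N-j-1)}{(N-i)(N-j)}.$$
   Context: This models one query of a greedy round-robin triplet ($3$IC) labeling algorithm on a dataset with $N$ equally likely classes: the length of a sample is the number of class representatives it has already been (unsuccessfully) compared with, so a sample of length $i$ is uniformly distributed over the $N-i$ classes not yet excluded; $s_1$ has length $i$, $s_2$ has length $j$, and the classes excluded for $s_2$ are among those excluded for $s_1$. A $3$IC query presents three items to an error-free oracle that reports which of them share a class; when $s_1,s_2$ match each other but not the representative, one of them is merged into the other and counted as settled. *)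

theory Defs
  imports "HOL-Probability.Probability"
begin

definition settled :: "'a \<Rightarrow> 'a \<Rightarrow> 'a \<Rightarrow> real" where
  "settled c x y =
     (if x = c \<and> y = c then 2
      else if x = c \<or> y = c then 1
      else if x = y then 1
      else 0)"

end

theory Submission
  imports Defs
begin

text \<open>The expectation is a uniform average over \<open>A \<times> B\<close>, so it suffices to count.
  Writing the settled count as \<open>[x = c] + [y = c] + [x \<noteq> c \<and> x = y]\<close>, the three
  indicators are supported on \<open>{c} \<times> B\<close>, \<open>A \<times> {c}\<close> and the diagonal over \<open>A - {c}\<close>
  (here \<open>A \<subseteq> B\<close> is used), which gives the total \<open>|B| + |A| + (|A| - 1)\<close>.\<close>

lemma pair_pmf_of_set:
  assumes "finite A" "A \<noteq> {}" "finite B" "B \<noteq> {}"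
  shows "pair_pmf (pmf_of_set A) (pmf_of_set B) = pmf_of_set (A \<times> B)"
  by (rule pmf_eqI) (auto simp: pmf_pair assms card_cartesian_product indicator_def)

lemma settled_eq_indicators:
  "settled c x y = of_bool (x = c) + of_bool (y = c) + of_bool (x \<noteq> c \<and> x = y)"
  by (simp add: settled_def)

lemma sum_settled:
  assumes "finite B" "A \<subseteq> B" "c \<in> A"
  shows "(\<Sum>(x, y)\<in>A \<times> B. settled c x y) = real (card B) + 2 * real (card A) - 1"
proof -
  have "finite A"
    using assms(1,2) finite_subset by blast
  have "A \<times> B \<inter> {p. fst p = c} = {c} \<times> B"
       "A \<times> B \<inter> {p. snd p = c} = A \<times> {c}"
       "A \<times> B \<inter> {p. fst p \<noteq> c \<and> fst p = snd p} = (\<lambda>x. (x, x)) ` (A - {c})"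
    using assms(2,3) by auto
  moreover have "inj_on (\<lambda>x. (x, x)) (A - {c})"
    by (rule inj_onI) simp
  moreover have "card A \<ge> 1"
    using \<open>finite A\<close> assms(3) by (metis One_nat_def Suc_leI card_gt_0_iff empty_iff)
  ultimately show ?thesis
    using assms \<open>finite A\<close>
    by (simp add: settled_eq_indicators sum.distrib split_beta' card_cartesian_product
        card_image of_nat_diff)
qed

theorem lemma2:
  fixes N i j :: nat and c :: 'a and A B :: "'a set"
  assumes "N \<ge> 3" and "j \<le> i" and "i < N - 1"
    and "finite B" and "A \<subseteq> B" and "c \<in> A"
    and "card A = N - i" and "card B = N - j"
  shows "measure_pmf.expectation (pair_pmf (pmf_of_set A) (pmf_of_set B))
           (\<lambda>(x, y). settled c x y)
         = (2 * (real N - real i) + (real N - real j - 1))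
           / ((real N - real i) * (real N - real j))"
proof -
  have "finite A" "A \<noteq> {}" "B \<noteq> {}"
    using assms(4-6) finite_subset by auto
  then have "measure_pmf.expectation (pair_pmf (pmf_of_set A) (pmf_of_set B))
               (\<lambda>(x, y). settled c x y)
             = (real (card B) + 2 * real (card A) - 1) / (real (card A) * real (card B))"
    using assms(4-6)
    by (simp add: pair_pmf_of_set integral_pmf_of_set sum_settled card_cartesian_product)
  then show ?thesis
    using assms(2,3,7,8) by (simp add: of_nat_diff)
qed

end
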